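(* Let $(X,p)$ be a metric space, $(Y,d)$ a complete separable metric space, and $F: X \Rightarrow Y$ a multi-valued function. Let $\overline{F}: X \Rightarrow Y$ be given by $\overline{F}(x) = $ the closure of $F(x)$, viewed also as a map $X \to \mathcal{F}(Y)$. Then: (1) $F$ is strongly continuous at $x\in X$ if and only if $\overline F$ is strongly continuous at $x$, if and only if $\overline F: X \to \mathcal{F}(Y)$ is continuous at $x$ with respect to the lower Fell topology on $\mathcal{F}(Y)$. In particular, if $\overline F: X \to \mathcal{F}(Y)$ is continuous at $x$ with respect to the Fell topology, then $F$ is strongly continuous at $x$. (2) Let $\mathcal{T}$ be a Polish topology on $\mathcal{F}(Y)$ whose Borel sets are exactly the sets of the Effros Borel $\sigma$-algebra. If $F$ is strongly continuous at every $x \in X$, then $\overline F: X \to (\mathcal{F}(Y),\mathcal{T})$ is Borel measurable (with $X$ carrying its Borel $\sigma$-algebra). (3) If the graph of $F$ is a closed subset of $X \times Y$ and $F$ is strongly continuous at $x \in X$, then $F: X \to \mathcal{F}(Y)$ is continuous at $x$ with respect to the Fell topology. (4) If the graph of $F$ is a closed subset of $X\times Y$, then $F$ is strongly continuous at $x \in X$ if and only if $F: X\to\mathcal{F}(Y)$ is continuous at $x$ with respect to the Fell topology.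
   Context: A multi-valued function $F: X \Rightarrow Y$ assigns to each $x$ a nonempty set $F(x)\subseteq Y$; its graph is $\{(x,y): y\in F(x)\}$. $F$ is strongly continuous at $x$ if for every $y \in F(x)$ and every $\varepsilon>0$ there is $\delta>0$ such that for every $x' \in B_p(x,\delta)$ there is $y' \in F(x')$ with $d(y,y')<\varepsilon$. $\mathcal{F}(Y)$ is the family of closed subsets of $Y$. The lower Fell topology on $\mathcal{F}(Y)$ is generated by the sets $\mathcal{A}_U = \{C \in \mathcal{F}(Y): C\cap U \neq\emptyset\}$ for $U\subseteq Y$ open; the Effros Borel $\sigma$-algebra is the $\sigma$-algebra generated by these sets $\mathcal{A}_U$. The Fell topology has as basis the sets $\{C\in\mathcal{F}(Y): C\cap K=\emptyset \text{ and } C\cap U_i\neq\emptyset \text{ for all } i\le n\}$ with $K\subseteq Y$ compact and $U_1,\dots,U_n\subseteq Y$ open. *)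

theory Defs
  imports "HOL-Analysis.Analysis"
begin

text \<open>Multi-valued functions F : X => Y are modelled as F :: 'a => 'b set,
  nonemptiness of values being an explicit hypothesis.\<close>

definition strongly_continuous_at :: "('a::metric_space \<Rightarrow> 'b::metric_space set) \<Rightarrow> 'a \<Rightarrow> bool" where
  "strongly_continuous_at F x \<longleftrightarrow>
     (\<forall>y\<in>F x. \<forall>\<epsilon>>0. \<exists>\<delta>>0. \<forall>x'. dist x x' < \<delta> \<longrightarrow> (\<exists>y'\<in>F x'. dist y y' < \<epsilon>))"

definition closed_sets :: "'b::topological_space set set" where
  "closed_sets = {C. closed C}"

definition hit_set :: "'b::topological_space set \<Rightarrow> 'b set set" where
  "hit_set U = {C \<in> closed_sets. C \<inter> U \<noteq> {}}"

definition miss_set :: "'b::topological_space set \<Rightarrow> 'b set set" where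
  "miss_set K = {C \<in> closed_sets. C \<inter> K = {}}"

definition lower_fell_topology :: "'b::topological_space set topology" where
  "lower_fell_topology =
     subtopology (topology_generated_by {hit_set U | U. open U}) closed_sets"

definition fell_topology :: "'b::topological_space set topology" where
  "fell_topology =
     subtopology (topology_generated_by
        ({hit_set U | U. open U} \<union> {miss_set K | K. compact K})) closed_sets"

definition effros_sets :: "'b::topological_space set set set" where
  "effros_sets = sigma_sets closed_sets {hit_set U | U. open U}"

definition polish_topology :: "'c topology \<Rightarrow> bool" where
  "polish_topology T \<longleftrightarrow> completely_metrizable_space T \<and> separable_space T"

definition borel_of :: "'c topology \<Rightarrow> 'c measure" where
  "borel_of T = sigma (topspace T) {U. openin T U}"

definition continuous_at_top :: "'c topology \<Rightarrow> ('a::metric_space \<Rightarrow> 'c) \<Rightarrow> 'a \<Rightarrow> bool" where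
  "continuous_at_top T g x \<longleftrightarrow> limitin T g (g x) (at x)"

end

theory Submission
  imports Defs
begin

text \<open>Strong continuity is lower hemicontinuity: every open set met by F x is met by F x'
  for x' near x. Open sets meet a set iff they meet its closure, so passing to closures changes
  nothing, and lower hemicontinuity is literally convergence in the lower Fell topology, whose
  subbasic open sets are the hit sets. The Fell topology adds the miss sets of compact K; when the
  graph is closed, a compact K missed by F x is missed by F x' for x' near x (tube lemma), so
  Fell continuity reduces to lower hemicontinuity. Finally, lower hemicontinuity everywhere makes
  the preimage of every hit set open, and the hit sets generate the Effros \<sigma>-algebra.\<close>

lemma eventually_generate_topology_on:
  assumes "generate_topology_on B V" "l \<in> V"
    and "\<And>W. W \<in> B \<Longrightarrow> l \<in> W \<Longrightarrow> eventually (\<lambda>x. g x \<in> W) F"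
  shows "eventually (\<lambda>x. g x \<in> V) F"
  using assms(1,2)
proof induction
  case (Int a b)
  then have "eventually (\<lambda>x. g x \<in> a \<and> g x \<in> b) F"
    by (intro eventually_conj) auto
  then show ?case by (rule eventually_mono) auto
next
  case (UN K)
  then obtain k where "k \<in> K" "l \<in> k" by auto
  with UN have "eventually (\<lambda>x. g x \<in> k) F" by auto
  then show ?case by (rule eventually_mono) (use \<open>k \<in> K\<close> in auto)
qed (use assms(3) in auto)

lemma limitin_subtopology_generated_by_iff:
  assumes "l \<in> \<Union>B" "l \<in> S" "\<And>x. g x \<in> S"
  shows "limitin (subtopology (topology_generated_by B) S) g l F
     \<longleftrightarrow> (\<forall>W\<in>B. l \<in> W \<longrightarrow> eventually (\<lambda>x. g x \<in> W) F)"
proof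
  assume lim: "limitin (subtopology (topology_generated_by B) S) g l F"
  show "\<forall>W\<in>B. l \<in> W \<longrightarrow> eventually (\<lambda>x. g x \<in> W) F"
  proof (intro ballI impI)
    fix W assume "W \<in> B" "l \<in> W"
    then have "openin (subtopology (topology_generated_by B) S) (W \<inter> S)"
      using topology_generated_by_Basis unfolding openin_subtopology by blast
    then have "eventually (\<lambda>x. g x \<in> W \<inter> S) F"
      using lim \<open>l \<in> W\<close> \<open>l \<in> S\<close> unfolding limitin_def by auto
    then show "eventually (\<lambda>x. g x \<in> W) F" by (rule eventually_mono) auto
  qed
next
  assume basis: "\<forall>W\<in>B. l \<in> W \<longrightarrow> eventually (\<lambda>x. g x \<in> W) F"
  show "limitin (subtopology (topology_generated_by B) S) g l F"
    unfolding limitin_def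
  proof (intro conjI allI impI)
    show "l \<in> topspace (subtopology (topology_generated_by B) S)"
      using assms by simp
  next
    fix U assume "openin (subtopology (topology_generated_by B) S) U \<and> l \<in> U"
    then obtain V where V: "generate_topology_on B V" "U = V \<inter> S" "l \<in> V"
      by (auto simp: openin_subtopology openin_topology_generated_by_iff)
    have "eventually (\<lambda>x. g x \<in> V) F"
      using eventually_generate_topology_on[OF V(1,3)] basis by blast
    then show "eventually (\<lambda>x. g x \<in> U) F"
      by (rule eventually_mono) (use V assms(3) in auto)
  qed
qed

lemma hit_set_iff: "closed C \<Longrightarrow> C \<in> hit_set U \<longleftrightarrow> C \<inter> U \<noteq> {}"
  by (simp add: hit_set_def closed_sets_def)

lemma miss_set_iff: "closed C \<Longrightarrow> C \<in> miss_set K \<longleftrightarrow> C \<inter> K = {}"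
  by (simp add: miss_set_def closed_sets_def)

text \<open>The topology generated by the hit sets lives on their union, which omits the empty
  set; this is where nonemptiness of the values enters.\<close>

lemma in_Union_hit_sets:
  assumes "closed C" "C \<noteq> {}"
  shows "C \<in> \<Union>{hit_set U | U. open U}"
  using assms hit_set_iff[of C UNIV] by blast

definition lower_hemicontinuous_at ::
    "('a::topological_space \<Rightarrow> 'b::topological_space set) \<Rightarrow> 'a \<Rightarrow> bool" where
  "lower_hemicontinuous_at G x \<longleftrightarrow>
     (\<forall>U. open U \<and> G x \<inter> U \<noteq> {} \<longrightarrow> eventually (\<lambda>x'. G x' \<inter> U \<noteq> {}) (at x))"

lemma strongly_continuous_at_iff_lower_hemicontinuous_at:
  "strongly_continuous_at G x \<longleftrightarrow> lower_hemicontinuous_at G x"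
proof
  assume sc: "strongly_continuous_at G x"
  show "lower_hemicontinuous_at G x" unfolding lower_hemicontinuous_at_def
  proof (intro allI impI)
    fix U assume U: "open U \<and> G x \<inter> U \<noteq> {}"
    then obtain y e where y: "y \<in> G x" and e: "e > 0" "ball y e \<subseteq> U"
      using open_contains_ball by blast
    obtain d where "d > 0" and d: "\<forall>x'. dist x x' < d \<longrightarrow> (\<exists>y'\<in>G x'. dist y y' < e)"
      using sc y e unfolding strongly_continuous_at_def by blast
    have "\<forall>x'. x' \<noteq> x \<and> dist x' x < d \<longrightarrow> G x' \<inter> U \<noteq> {}"
      using d e by (fastforce simp: dist_commute)
    then show "eventually (\<lambda>x'. G x' \<inter> U \<noteq> {}) (at x)"
      unfolding eventually_at using \<open>d > 0\<close> by blast
  qed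
next
  assume lhc: "lower_hemicontinuous_at G x"
  show "strongly_continuous_at G x" unfolding strongly_continuous_at_def
  proof (intro ballI allI impI)
    fix y e assume y: "y \<in> G x" and "(e::real) > 0"
    then have "eventually (\<lambda>x'. G x' \<inter> ball y e \<noteq> {}) (at x)"
      using lhc unfolding lower_hemicontinuous_at_def by (meson centre_in_ball disjoint_iff open_ball)
    then obtain d where "d > 0" and d: "\<forall>x'. x' \<noteq> x \<and> dist x' x < d \<longrightarrow> G x' \<inter> ball y e \<noteq> {}"
      unfolding eventually_at by auto
    have "\<forall>x'. dist x x' < d \<longrightarrow> (\<exists>y'\<in>G x'. dist y y' < e)"
      using d y \<open>e > 0\<close> by (metis disjoint_iff dist_commute dist_self mem_ball)
    then show "\<exists>d>0. \<forall>x'. dist x x' < d \<longrightarrow> (\<exists>y'\<in>G x'. dist y y' < e)"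
      using \<open>d > 0\<close> by blast
  qed
qed

lemma lower_hemicontinuous_at_closure_iff:
  "lower_hemicontinuous_at (\<lambda>x. closure (G x)) x \<longleftrightarrow> lower_hemicontinuous_at G x"
proof -
  have "\<And>U y. open U \<Longrightarrow> closure (G y) \<inter> U \<noteq> {} \<longleftrightarrow> G y \<inter> U \<noteq> {}"
    by (simp add: Int_commute open_Int_closure_eq_empty)
  then show ?thesis unfolding lower_hemicontinuous_at_def by (simp cong: conj_cong)
qed

lemma hit_sets_eventually_iff:
  fixes G :: "'a \<Rightarrow> 'b::topological_space set"
  assumes "\<And>x'. closed (G x')"
  shows "(\<forall>W\<in>{hit_set U | U. open U}. G x \<in> W \<longrightarrow> eventually (\<lambda>x'. G x' \<in> W) F)
     \<longleftrightarrow> (\<forall>U. open U \<and> G x \<inter> U \<noteq> {} \<longrightarrow> eventually (\<lambda>x'. G x' \<inter> U \<noteq> {}) F)"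
proof -
  have "(\<forall>W\<in>{hit_set U | U. open U}. P W) \<longleftrightarrow> (\<forall>U. open U \<longrightarrow> P (hit_set U))"
    for P :: "'b set set \<Rightarrow> bool"
    by blast
  then show ?thesis by (simp add: hit_set_iff[OF assms] imp_conjL)
qed

lemma miss_sets_eventually_iff:
  fixes G :: "'a \<Rightarrow> 'b::topological_space set"
  assumes "\<And>x'. closed (G x')"
  shows "(\<forall>W\<in>{miss_set K | K. compact K}. G x \<in> W \<longrightarrow> eventually (\<lambda>x'. G x' \<in> W) F)
     \<longleftrightarrow> (\<forall>K. compact K \<and> G x \<inter> K = {} \<longrightarrow> eventually (\<lambda>x'. G x' \<inter> K = {}) F)"
proof -
  have "(\<forall>W\<in>{miss_set K | K. compact K}. P W) \<longleftrightarrow> (\<forall>K. compact K \<longrightarrow> P (miss_set K))"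
    for P :: "'b set set \<Rightarrow> bool"
    by blast
  then show ?thesis by (simp add: miss_set_iff[OF assms] imp_conjL)
qed

lemma continuous_at_top_lower_fell_topology_iff:
  assumes "\<And>x'. closed (G x')" "G x \<noteq> {}"
  shows "continuous_at_top lower_fell_topology G x \<longleftrightarrow> lower_hemicontinuous_at G x"
proof -
  have "continuous_at_top lower_fell_topology G x \<longleftrightarrow>
      (\<forall>W\<in>{hit_set U | U. open U}. G x \<in> W \<longrightarrow> eventually (\<lambda>x'. G x' \<in> W) (at x))"
    unfolding continuous_at_top_def lower_fell_topology_def
    using assms by (intro limitin_subtopology_generated_by_iff in_Union_hit_sets)
      (auto simp: closed_sets_def)
  also have "\<dots> \<longleftrightarrow> lower_hemicontinuous_at G x"
    unfolding lower_hemicontinuous_at_def by (rule hit_sets_eventually_iff[OF assms(1)])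
  finally show ?thesis .
qed

lemma continuous_at_top_fell_topology_iff:
  assumes "\<And>x'. closed (G x')" "G x \<noteq> {}"
  shows "continuous_at_top fell_topology G x \<longleftrightarrow>
    lower_hemicontinuous_at G x \<and>
    (\<forall>K. compact K \<and> G x \<inter> K = {} \<longrightarrow> eventually (\<lambda>x'. G x' \<inter> K = {}) (at x))"
proof -
  have "G x \<in> \<Union>({hit_set U | U. open U} \<union> {miss_set K | K. compact K})"
    using in_Union_hit_sets[OF assms] by blast
  then have "continuous_at_top fell_topology G x \<longleftrightarrow>
      (\<forall>W\<in>{hit_set U | U. open U} \<union> {miss_set K | K. compact K}.
         G x \<in> W \<longrightarrow> eventually (\<lambda>x'. G x' \<in> W) (at x))"
    unfolding continuous_at_top_def fell_topology_def
    using assms by (intro limitin_subtopology_generated_by_iff) (auto simp: closed_sets_def)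
  also have "\<dots> \<longleftrightarrow> lower_hemicontinuous_at G x \<and>
      (\<forall>K. compact K \<and> G x \<inter> K = {} \<longrightarrow> eventually (\<lambda>x'. G x' \<inter> K = {}) (at x))"
    unfolding ball_Un lower_hemicontinuous_at_def
    by (rule arg_cong2[where f = "(\<and>)",
          OF hit_sets_eventually_iff[OF assms(1)] miss_sets_eventually_iff[OF assms(1)]])
  finally show ?thesis .
qed

lemma closed_graph_imp_closed_values:
  assumes "closed {(x, y). y \<in> G x}"
  shows "closed (G x)"
proof -
  have "closed (Pair x -` {(x, y). y \<in> G x})"
    using assms by (intro continuous_closed_vimage continuous_intros)
  then show ?thesis by simp
qed

lemma closed_graph_imp_eventually_miss_compact:
  assumes "closed {(x, y). y \<in> G x}" "compact K" "G x \<inter> K = {}"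
  shows "eventually (\<lambda>x'. G x' \<inter> K = {}) (at x)"
proof -
  have "{x} \<times> K \<subseteq> - {(x, y). y \<in> G x}" using assms(3) by auto
  then obtain X0 where "x \<in> X0" "open X0" and tube: "X0 \<times> K \<subseteq> - {(x, y). y \<in> G x}"
    using Elementary_Topology.tube_lemma[OF assms(2) open_Compl[OF assms(1)]] by blast
  have "eventually (\<lambda>x'. x' \<in> X0) (at x)"
    using eventually_nhds_in_open[OF \<open>open X0\<close> \<open>x \<in> X0\<close>] by (simp add: eventually_nhds_conv_at)
  then show ?thesis
    by (rule eventually_mono) (use tube in blast)
qed

lemma open_hitting_set:
  assumes "\<And>x. lower_hemicontinuous_at G x" "open U"
  shows "open {x. G x \<inter> U \<noteq> {}}"
proof (subst open_subopen, intro ballI)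
  fix x assume "x \<in> {x. G x \<inter> U \<noteq> {}}"
  then have "eventually (\<lambda>x'. G x' \<inter> U \<noteq> {}) (nhds x)"
    using assms unfolding eventually_nhds_conv_at lower_hemicontinuous_at_def by blast
  then obtain T where "open T" "x \<in> T" "\<forall>x'\<in>T. G x' \<inter> U \<noteq> {}"
    unfolding eventually_nhds by blast
  then show "\<exists>T. open T \<and> x \<in> T \<and> T \<subseteq> {x. G x \<inter> U \<noteq> {}}" by blast
qed

lemma measurable_hit_sets:
  fixes G :: "'a::topological_space \<Rightarrow> 'b::topological_space set"
  assumes "\<And>x. closed (G x)" "\<And>x. lower_hemicontinuous_at G x"
  shows "G \<in> borel \<rightarrow>\<^sub>M sigma closed_sets {hit_set U | U. open U}"
proof (rule measurable_measure_of)
  show "{hit_set U | U. open U} \<subseteq> Pow closed_sets" by (auto simp: hit_set_def)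
  show "G \<in> space borel \<rightarrow> closed_sets" using assms(1) by (auto simp: closed_sets_def)
  fix W assume "W \<in> {hit_set U | U::'b set. open U}"
  then obtain U where "W = hit_set U" "open U" by auto
  then have "G -` W \<inter> space borel = {x. G x \<inter> U \<noteq> {}}"
    using assms(1) hit_set_iff by auto
  then show "G -` W \<inter> space borel \<in> sets borel"
    using open_hitting_set[OF assms(2) \<open>open U\<close>] by simp
qed

lemma strongly_continuous_at_closure_iff:
  "strongly_continuous_at (\<lambda>x. closure (F x)) x \<longleftrightarrow> strongly_continuous_at F x"
  unfolding strongly_continuous_at_iff_lower_hemicontinuous_at
  by (rule lower_hemicontinuous_at_closure_iff)

lemma continuous_at_top_fell_topology_imp_strongly_continuous_at:
  assumes "\<And>x'. closed (G x')" "G x \<noteq> {}" "continuous_at_top fell_topology G x"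
  shows "strongly_continuous_at G x"
  using continuous_at_top_fell_topology_iff[of G, OF assms(1,2)] assms(3)
  unfolding strongly_continuous_at_iff_lower_hemicontinuous_at by blast

lemma closed_graph_imp_strongly_continuous_at_iff_fell:
  assumes "closed {(x, y). y \<in> F x}" "F x \<noteq> {}"
  shows "strongly_continuous_at F x \<longleftrightarrow> continuous_at_top fell_topology F x"
  unfolding strongly_continuous_at_iff_lower_hemicontinuous_at
    continuous_at_top_fell_topology_iff[of F, OF closed_graph_imp_closed_values[OF assms(1)] assms(2)]
  using closed_graph_imp_eventually_miss_compact[OF assms(1)] by blast

lemma measurable_closure_effros:
  fixes F :: "'a::metric_space \<Rightarrow> 'b::metric_space set"
  assumes "sets M = effros_sets" "\<And>x. strongly_continuous_at F x"
  shows "(\<lambda>x. closure (F x)) \<in> borel \<rightarrow>\<^sub>M M"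
proof -
  let ?E = "{hit_set U | U. open U} :: 'b set set set"
  have "?E \<subseteq> Pow closed_sets" by (auto simp: hit_set_def)
  then have sets_eq: "sets M = sets (sigma closed_sets ?E)"
    by (simp add: assms(1) effros_sets_def sets_measure_of)
  have "lower_hemicontinuous_at (\<lambda>x. closure (F x)) x" for x
    using assms(2)[of x] strongly_continuous_at_closure_iff[of F x]
    unfolding strongly_continuous_at_iff_lower_hemicontinuous_at by blast
  then have "(\<lambda>x. closure (F x)) \<in> borel \<rightarrow>\<^sub>M sigma closed_sets ?E"
    by (intro measurable_hit_sets closed_closure)
  then show ?thesis
    unfolding measurable_cong_sets[OF refl sets_eq] .
qed

theorem proposition3p3:
  fixes F :: "'a::metric_space \<Rightarrow> 'b::polish_space set"
  assumes nonempty: "\<And>x. F x \<noteq> {}"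
  shows
    "(\<forall>x. (strongly_continuous_at F x \<longleftrightarrow> strongly_continuous_at (\<lambda>x. closure (F x)) x)
        \<and> (strongly_continuous_at (\<lambda>x. closure (F x)) x
             \<longleftrightarrow> continuous_at_top lower_fell_topology (\<lambda>x. closure (F x)) x)
        \<and> (continuous_at_top fell_topology (\<lambda>x. closure (F x)) x \<longrightarrow> strongly_continuous_at F x))
   \<and> (\<forall>T :: 'b set topology.
        polish_topology T \<and> topspace T = closed_sets \<and> sets (borel_of T) = effros_sets
        \<and> (\<forall>x. strongly_continuous_at F x)
        \<longrightarrow> (\<lambda>x. closure (F x)) \<in> borel \<rightarrow>\<^sub>M borel_of T)
   \<and> (closed {(x, y). y \<in> F x} \<longrightarrow>
        (\<forall>x. strongly_continuous_at F x \<longrightarrow> continuous_at_top fell_topology F x))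
   \<and> (closed {(x, y). y \<in> F x} \<longrightarrow>
        (\<forall>x. strongly_continuous_at F x \<longleftrightarrow> continuous_at_top fell_topology F x))"
proof (intro conjI allI impI)
  let ?H = "\<lambda>x. closure (F x)"
  fix x
  have closure_nonempty: "?H x' \<noteq> {}" for x' using nonempty by simp
  show "strongly_continuous_at F x \<longleftrightarrow> strongly_continuous_at ?H x"
    by (rule strongly_continuous_at_closure_iff[symmetric])
  show "strongly_continuous_at ?H x \<longleftrightarrow> continuous_at_top lower_fell_topology ?H x"
    unfolding strongly_continuous_at_iff_lower_hemicontinuous_at
    by (rule continuous_at_top_lower_fell_topology_iff[symmetric, OF closed_closure closure_nonempty])
  show "strongly_continuous_at F x" if "continuous_at_top fell_topology ?H x"
    using continuous_at_top_fell_topology_imp_strongly_continuous_at[OF closed_closure closure_nonempty that]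
    by (simp only: strongly_continuous_at_closure_iff)
  show "strongly_continuous_at F x \<longleftrightarrow> continuous_at_top fell_topology F x"
    if "closed {(x, y). y \<in> F x}"
    using that nonempty by (rule closed_graph_imp_strongly_continuous_at_iff_fell)
  then show "continuous_at_top fell_topology F x"
    if "closed {(x, y). y \<in> F x}" "strongly_continuous_at F x"
    using that by blast
next
  fix T :: "'b set topology"
  assume "polish_topology T \<and> topspace T = closed_sets \<and> sets (borel_of T) = effros_sets
    \<and> (\<forall>x. strongly_continuous_at F x)"
  then show "(\<lambda>x. closure (F x)) \<in> borel \<rightarrow>\<^sub>M borel_of T"
    by (intro measurable_closure_effros) blast+
qed

end
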